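(* Let $d\ge2$, $\Psi(\mathbf x)=-\sum_{i=1}^d\ln\bar x_i$ and $f(\mathbf w)=-\log\langle\mathbf r,\bar{\mathbf w}\rangle$ for some $\mathbf r\in[0,1]^d\setminus\{\mathbf 0\}$. Then for all $\mu\in(0,1)$ and all $\tilde{\mathbf w}\in\mathcal C_{d-1}$ with $\bar{\tilde w}_i>0$ for all $i\in\{1,\dots,d\}$, setting $\mathbf w=(1-\mu)\tilde{\mathbf w}+\mu\mathbf 1/d$, we have $$\nabla f(\mathbf w)\nabla f(\mathbf w)^\top\preceq(1-\mu)^{-2}\nabla^2\Psi(\tilde{\mathbf w}),$$ and furthermore $\|\nabla f(\mathbf w)\|^2_{\nabla^{-2}\Psi(\tilde{\mathbf w})}\le(1-\mu)^{-2}$.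
   Context: $\mathcal C_{d-1}=\{\mathbf u\in\mathbb R^{d-1}:u_i\ge0,\ \sum_iu_i\le1\}$. For $\mathbf v\in\mathbb R^{d-1}$, $\bar{\mathbf v}=(v_1,\dots,v_{d-1},1-\sum_{i=1}^{d-1}v_i)\in\mathbb R^d$. $\mathbf 1$ is the all-ones vector in $\mathbb R^{d-1}$, $\preceq$ is the Loewner order, $\|\mathbf x\|_A=\sqrt{\mathbf x^\top A\mathbf x}$, and $\nabla^{-2}\Psi(\tilde{\mathbf w})=(\nabla^2\Psi(\tilde{\mathbf w}))^{-1}$. *)

theory Defs
  imports "HOL-Analysis.Analysis"
begin

text \<open>Vectors in R^(d-1) are modelled as real^'n with d - 1 = CARD('n) (so d >= 2 automatically);
  vectors in R^d are indexed by 'n option, where None is the last coordinate.\<close>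

definition bar :: "real^'n \<Rightarrow> real^('n option)" where
  "bar v = (\<chi> i. case i of Some j \<Rightarrow> v $ j | None \<Rightarrow> 1 - (\<Sum>k\<in>UNIV. v $ k))"

definition simplex_C :: "(real^'n) set" where
  "simplex_C = {u. (\<forall>i. u $ i \<ge> 0) \<and> (\<Sum>i\<in>UNIV. u $ i) \<le> 1}"

definition Psi :: "real^'n \<Rightarrow> real" where
  "Psi x = - (\<Sum>i\<in>UNIV. ln (bar x $ i))"

definition floss :: "real^('n option) \<Rightarrow> real^'n \<Rightarrow> real" where
  "floss r w = - ln (r \<bullet> bar w)"

definition grad :: "(real^'n \<Rightarrow> real) \<Rightarrow> real^'n \<Rightarrow> real^'n" where
  "grad F x = (THE g. (F has_derivative (\<lambda>h. g \<bullet> h)) (at x))"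

definition hess :: "(real^'n \<Rightarrow> real) \<Rightarrow> real^'n \<Rightarrow> real^'n^'n" where
  "hess F x = (THE H. (grad F has_derivative (\<lambda>h. H *v h)) (at x))"

definition loewner_le :: "real^'n^'n \<Rightarrow> real^'n^'n \<Rightarrow> bool" where
  "loewner_le A B \<longleftrightarrow> (\<forall>x. x \<bullet> (A *v x) \<le> x \<bullet> (B *v x))"

definition outer :: "real^'n \<Rightarrow> real^'n^'n" where
  "outer g = (\<chi> i j. g $ i * g $ j)"

end

theory Submission
  imports Defs
begin

text \<open>Let \<open>lift h\<close> be the linear part of the affine map \<open>bar\<close>, so that
  \<open>bar (x + h) = bar x + lift h\<close>, and let \<open>b = bar wt\<close>. The Hessian form of \<open>Psi\<close> at \<open>wt\<close> is
  \<open>\<Sum>i. (lift h $ i / b $ i)\<^sup>2\<close>, and \<open>grad (floss r) w \<bullet> h = - (r \<bullet> lift h) / (r \<bullet> bar w)\<close>.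
  Cauchy-Schwarz with the nonnegative weights \<open>r $ i * b $ i\<close>, whose squares sum to at most
  \<open>(r \<bullet> b)\<^sup>2\<close>, bounds \<open>(r \<bullet> lift h)\<^sup>2\<close> by \<open>(r \<bullet> b)\<^sup>2\<close> times the Hessian form; and since
  \<open>bar w = (1 - \<mu>) b + (\<mu> / d) 1\<close> with \<open>r \<ge> 0\<close>, we have \<open>r \<bullet> bar w \<ge> (1 - \<mu>) (r \<bullet> b)\<close>.
  Together these give the Loewner bound. Testing it at \<open>h = H\<^sup>-\<^sup>1 g\<close> yields
  \<open>t\<^sup>2 \<le> (1 - \<mu>)\<^sup>-\<^sup>2 t\<close> for \<open>t = g \<bullet> H\<^sup>-\<^sup>1 g\<close>, hence the second claim.\<close>

lemma has_derivative_vec_lambda: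
  fixes f f' :: "'n::finite \<Rightarrow> 'a::real_normed_vector \<Rightarrow> real"
  assumes "\<And>j. (f j has_derivative f' j) (at a within S)"
  shows "((\<lambda>x. \<chi> j. f j x) has_derivative (\<lambda>h. \<chi> j. f' j h)) (at a within S)"
proof (rule has_derivative_componentwise_within[THEN iffD2], rule ballI)
  fix i :: "real^'n" assume "i \<in> Basis"
  then obtain j where "i = axis j 1" using axis_inverse by blast
  then have "\<And>y::real^'n. y \<bullet> i = y $ j" by (simp add: inner_axis)
  then show "((\<lambda>x. (\<chi> j. f j x) \<bullet> i) has_derivative (\<lambda>h. (\<chi> j. f' j h) \<bullet> i)) (at a within S)"
    using assms by simp
qed

lemma grad_eqI:
  assumes "(F has_derivative (\<lambda>h. g \<bullet> h)) (at x)"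
  shows "grad F x = g"
  unfolding grad_def
proof (rule the_equality)
  fix g' assume "(F has_derivative (\<lambda>h. g' \<bullet> h)) (at x)"
  from has_derivative_unique[OF assms this] have "(g - g') \<bullet> (g - g') = 0"
    by (metis inner_diff_left right_minus_eq)
  then show "g' = g" by simp
qed (rule assms)

lemma hess_eq_matrix:
  assumes "(grad F has_derivative f) (at x)"
  shows "hess F x = matrix f"
  unfolding hess_def
proof (rule the_equality)
  show "(grad F has_derivative (\<lambda>h. matrix f *v h)) (at x)"
    using assms has_derivative_linear[OF assms] by simp
  fix H assume "(grad F has_derivative (\<lambda>h. H *v h)) (at x)"
  from has_derivative_unique[OF assms this] show "H = matrix f" by simp
qed

lemma matrix_inv_right:
  fixes A :: "real^'n^'n"
  assumes "invertible A"
  shows "A ** matrix_inv A = mat 1"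
  using someI_ex[of "\<lambda>A'. A ** A' = mat 1 \<and> A' ** A = mat 1"] assms
  unfolding invertible_def matrix_inv_def by blast

lemma invertible_if_pos_def:
  fixes A :: "real^'n^'n"
  assumes "\<And>h. h \<noteq> 0 \<Longrightarrow> 0 < h \<bullet> (A *v h)"
  shows "invertible A"
proof -
  have "inj ((*v) A)"
  proof (rule injI)
    fix a b assume "A *v a = A *v b"
    then have "(a - b) \<bullet> (A *v (a - b)) = 0" by (simp add: matrix_vector_mult_diff_distrib)
    then show "a = b" using assms[of "a - b"] by force
  qed
  then show ?thesis
    by (simp add: invertible_left_inverse matrix_left_invertible_injective)
qed

lemma loewner_le_outer_iff:
  "loewner_le (outer g) (c *\<^sub>R H) \<longleftrightarrow> (\<forall>x. (g \<bullet> x)\<^sup>2 \<le> c * (x \<bullet> (H *v x)))"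
proof -
  have "outer g *v x = (g \<bullet> x) *\<^sub>R g" for x
    by (simp add: vec_eq_iff outer_def matrix_vector_mult_def inner_vec_def sum_distrib_left mult_ac)
  then show ?thesis
    by (simp add: loewner_le_def scaleR_matrix_vector_assoc[symmetric] power2_eq_square inner_commute)
qed

lemma inner_matrix_inv_le_if_loewner_le_outer:
  fixes H :: "real^'n^'n"
  assumes "invertible H" and "0 \<le> c" and "loewner_le (outer g) (c *\<^sub>R H)"
  shows "g \<bullet> (matrix_inv H *v g) \<le> c"
proof -
  define z where "z = matrix_inv H *v g"
  have "H *v z = g"
    using assms(1) by (simp add: z_def matrix_vector_mul_assoc matrix_inv_right)
  then have "(g \<bullet> z) * (g \<bullet> z) \<le> c * (g \<bullet> z)"
    using assms(3) loewner_le_outer_iff by (metis inner_commute power2_eq_square)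
  then have "g \<bullet> z \<le> c"
    using \<open>0 \<le> c\<close> by (cases "0 < g \<bullet> z") (simp_all add: mult_le_cancel_right_pos)
  then show ?thesis by (simp add: z_def)
qed

lemma inner_square_le_weighted:
  fixes r b y :: "real^'m"
  assumes "\<forall>i. 0 \<le> r $ i" and "\<forall>i. 0 < b $ i"
  shows "(r \<bullet> y)\<^sup>2 \<le> (r \<bullet> b)\<^sup>2 * (\<Sum>i\<in>UNIV. (y $ i / b $ i)\<^sup>2)"
proof -
  define u :: "real^'m" where "u = (\<chi> i. r $ i * b $ i)"
  define v :: "real^'m" where "v = (\<chi> i. y $ i / b $ i)"
  have u_nonneg: "0 \<le> u $ i" for i
    using assms by (simp add: u_def less_imp_le)
  have "u \<bullet> u = (\<Sum>i\<in>UNIV. u $ i * u $ i)" by (simp add: inner_vec_def)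
  also have "\<dots> \<le> (\<Sum>i\<in>UNIV. u $ i * (\<Sum>j\<in>UNIV. u $ j))"
    using u_nonneg by (intro sum_mono mult_left_mono member_le_sum) auto
  also have "\<dots> = (r \<bullet> b)\<^sup>2"
    by (simp add: u_def inner_vec_def power2_eq_square sum_distrib_right)
  finally have uu: "u \<bullet> u \<le> (r \<bullet> b)\<^sup>2" .
  have "r \<bullet> y = u \<bullet> v"
    using assms(2) by (simp add: u_def v_def inner_vec_def less_imp_neq[THEN not_sym])
  then have "(r \<bullet> y)\<^sup>2 \<le> (u \<bullet> u) * (v \<bullet> v)"
    by (simp add: Cauchy_Schwarz_ineq)
  also have "\<dots> \<le> (r \<bullet> b)\<^sup>2 * (v \<bullet> v)"
    using uu by (rule mult_right_mono) simp
  also have "v \<bullet> v = (\<Sum>i\<in>UNIV. (y $ i / b $ i)\<^sup>2)"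
    by (simp add: v_def inner_vec_def power2_eq_square)
  finally show ?thesis .
qed

lemma inner_pos_if_nonneg_nonzero:
  fixes r b :: "real^'m"
  assumes "\<forall>i. 0 \<le> r $ i" and "r \<noteq> 0" and "\<forall>i. 0 < b $ i"
  shows "0 < r \<bullet> b"
proof -
  obtain i where "r $ i \<noteq> 0" using assms(2) by (auto simp: vec_eq_iff)
  with assms show ?thesis
    unfolding inner_vec_def
    by (intro sum_pos2[of UNIV i]) (auto simp: less_le intro: mult_nonneg_nonneg)
qed

definition lift :: "real^'n \<Rightarrow> real^('n option)" where
  "lift h = (\<chi> i. case i of Some j \<Rightarrow> h $ j | None \<Rightarrow> - (\<Sum>k\<in>UNIV. h $ k))"

definition lift_adj :: "real^('n option) \<Rightarrow> real^'n" where
  "lift_adj a = (\<chi> j. a $ Some j - a $ None)"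

lemma sum_UNIV_option: "(\<Sum>i\<in>UNIV. f i) = f None + (\<Sum>j\<in>(UNIV::'n::finite set). f (Some j))"
  by (simp add: UNIV_option_conv sum.reindex)

lemma vec_option_eqI:
  "x $ None = y $ None \<Longrightarrow> (\<And>j. x $ Some j = y $ Some j) \<Longrightarrow> x = y"
  by (metis not_None_eq vec_eq_iff)

lemma bar_None [simp]: "bar v $ None = 1 - (\<Sum>k\<in>UNIV. v $ k)"
  and bar_Some [simp]: "bar v $ Some j = v $ j"
  by (simp_all add: bar_def)

lemma lift_None [simp]: "lift h $ None = - (\<Sum>k\<in>UNIV. h $ k)"
  and lift_Some [simp]: "lift h $ Some j = h $ j"
  by (simp_all add: lift_def)

lemma bar_conv_lift: "bar x = lift x + bar 0"
  by (rule vec_option_eqI) simp_all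

lemma linear_lift: "linear lift"
  by (rule linearI; rule vec_option_eqI) (simp_all add: sum.distrib sum_distrib_left)

lemma has_derivative_bar [derivative_intros]: "(bar has_derivative lift) F"
  by (subst bar_conv_lift[abs_def]) (intro has_derivative_add_const linear_imp_has_derivative linear_lift)

lemma has_derivative_bar_nth [derivative_intros]:
  "((\<lambda>x. bar x $ i) has_derivative (\<lambda>h. lift h $ i)) F"
  by (rule bounded_linear.has_derivative[OF bounded_linear_vec_nth has_derivative_bar])

lemma inner_lift_adj: "lift_adj a \<bullet> h = a \<bullet> lift h"
  by (simp add: inner_vec_def lift_adj_def sum_UNIV_option[where f = "\<lambda>i. a $ i * lift h $ i"]
      sum_subtractf sum_distrib_left algebra_simps)

lemma linear_lift_adj: "linear lift_adj"
  by (rule linearI) (simp_all add: vec_eq_iff lift_adj_def algebra_simps)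

lemma lift_eq_0_iff: "lift h = 0 \<longleftrightarrow> h = 0"
  by (metis lift_Some linear_0 linear_lift vec_eq_iff zero_index)

lemma bar_affine: "a + b = 1 \<Longrightarrow> bar (a *\<^sub>R x + b *\<^sub>R y) = a *\<^sub>R bar x + b *\<^sub>R bar y"
  by (rule vec_option_eqI) (simp_all add: sum.distrib sum_distrib_left algebra_simps)

lemma bar_barycenter:
  "bar ((1 / real (CARD('n) + 1)) *\<^sub>R (\<chi> i. 1) :: real^'n) = (\<chi> i. 1 / real (CARD('n) + 1))"
  by (rule vec_option_eqI) (simp_all add: field_simps)

lemma inner_bar_toward_barycenter_ge:
  fixes x :: "real^'n"
  assumes "\<forall>i. 0 \<le> r $ i" and "0 \<le> \<mu>"
  shows "(1 - \<mu>) * (r \<bullet> bar x)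
    \<le> r \<bullet> bar ((1 - \<mu>) *\<^sub>R x + (\<mu> / real (CARD('n) + 1)) *\<^sub>R (\<chi> i. 1))"
proof -
  define u :: "real^'n" where "u = (1 / real (CARD('n) + 1)) *\<^sub>R (\<chi> i. 1)"
  have "(1 - \<mu>) *\<^sub>R x + (\<mu> / real (CARD('n) + 1)) *\<^sub>R (\<chi> i. 1) = (1 - \<mu>) *\<^sub>R x + \<mu> *\<^sub>R u"
    by (simp add: u_def)
  then have "r \<bullet> bar ((1 - \<mu>) *\<^sub>R x + (\<mu> / real (CARD('n) + 1)) *\<^sub>R (\<chi> i. 1))
      = (1 - \<mu>) * (r \<bullet> bar x) + \<mu> * (r \<bullet> bar u)"
    by (simp add: bar_affine inner_add_right)
  moreover have "0 \<le> r \<bullet> bar u"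
    using assms(1) unfolding u_def bar_barycenter by (simp add: inner_vec_def sum_nonneg)
  ultimately show ?thesis
    using assms(2) by simp
qed

lemma grad_floss:
  assumes "0 < r \<bullet> bar x"
  shows "grad (floss r) x = - (1 / (r \<bullet> bar x)) *\<^sub>R lift_adj r"
proof (rule grad_eqI)
  have "(floss r has_derivative (\<lambda>h. - ((r \<bullet> lift h) * inverse (r \<bullet> bar x)))) (at x)"
    unfolding floss_def[abs_def]
    using assms by (intro derivative_eq_intros) auto
  then show "(floss r has_derivative (\<lambda>h. (- (1 / (r \<bullet> bar x)) *\<^sub>R lift_adj r) \<bullet> h)) (at x)"
    by (simp add: inner_lift_adj divide_inverse mult.commute)
qed

definition Psi_dom :: "(real^'n) set" where
  "Psi_dom = {x. \<forall>i. 0 < bar x $ i}"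

lemma open_Psi_dom: "open (Psi_dom :: (real^'n) set)"
proof -
  have "continuous_on UNIV (\<lambda>x::real^'n. bar x $ i)" for i
    by (rule has_derivative_continuous_on) (rule has_derivative_bar_nth)
  then have "open {x::real^'n. 0 < bar x $ i}" for i
    by (rule open_Collect_less[OF continuous_on_const])
  then show ?thesis
    unfolding Psi_dom_def Collect_all_eq by (intro open_INT) simp_all
qed

lemma grad_Psi:
  assumes "x \<in> Psi_dom"
  shows "grad Psi x = - lift_adj (\<chi> i. 1 / bar x $ i)"
proof (rule grad_eqI)
  have "(Psi has_derivative (\<lambda>h. - (\<Sum>i\<in>UNIV. lift h $ i * inverse (bar x $ i)))) (at x)"
    unfolding Psi_def[abs_def]
    using assms by (intro derivative_eq_intros) (auto simp: Psi_dom_def)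
  moreover have "- lift_adj (\<chi> i. 1 / bar x $ i) \<bullet> h = - (\<Sum>i\<in>UNIV. lift h $ i * inverse (bar x $ i))" for h
    by (simp only: inner_minus_left inner_lift_adj) (simp add: inner_vec_def divide_inverse mult.commute)
  ultimately show "(Psi has_derivative (\<lambda>h. (- lift_adj (\<chi> i. 1 / bar x $ i)) \<bullet> h)) (at x)"
    by simp
qed

lemma hess_Psi_mult:
  assumes "x \<in> Psi_dom"
  shows "hess Psi x *v h = lift_adj (\<chi> i. lift h $ i / (bar x $ i)\<^sup>2)"
proof -
  define f where "f h = lift_adj (\<chi> i. lift h $ i / (bar x $ i)\<^sup>2)" for h
  have nonzero: "bar x $ i \<noteq> 0" for i
    using assms by (simp add: Psi_dom_def less_imp_neq[THEN not_sym])
  have "((\<lambda>y. - lift_adj (\<chi> i. inverse (bar y $ i))) has_derivative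
      (\<lambda>h. - lift_adj (\<chi> i. - (inverse (bar x $ i) * lift h $ i * inverse (bar x $ i))))) (at x)"
    using nonzero
    by (intro derivative_intros bounded_linear.has_derivative[where f = lift_adj]
        has_derivative_vec_lambda linear_conv_bounded_linear[THEN iffD1, OF linear_lift_adj])
  moreover have "(\<lambda>h. - lift_adj (\<chi> i. - (inverse (bar x $ i) * lift h $ i * inverse (bar x $ i)))) = f"
    by (rule ext) (simp add: f_def lift_adj_def vec_eq_iff power2_eq_square divide_inverse mult.commute)
  ultimately have "((\<lambda>y. - lift_adj (\<chi> i. inverse (bar y $ i))) has_derivative f) (at x)"
    by simp
  then have "(grad Psi has_derivative f) (at x)"
    by (rule has_derivative_transform_within_open[OF _ open_Psi_dom assms])
      (simp add: grad_Psi divide_inverse)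
  then have "hess Psi x = matrix f" and "linear f"
    by (rule hess_eq_matrix, rule has_derivative_linear)
  then show ?thesis
    by (simp add: f_def matrix_works linear_matrix_vector_mul_eq)
qed

lemma inner_hess_Psi:
  assumes "x \<in> Psi_dom"
  shows "h \<bullet> (hess Psi x *v h) = (\<Sum>i\<in>UNIV. (lift h $ i / bar x $ i)\<^sup>2)"
proof -
  have "h \<bullet> (hess Psi x *v h) = (\<chi> i. lift h $ i / (bar x $ i)\<^sup>2) \<bullet> lift h"
    using assms by (simp only: hess_Psi_mult inner_commute[of h] inner_lift_adj)
  then show ?thesis
    by (simp add: inner_vec_def power2_eq_square)
qed

lemma inner_hess_Psi_pos:
  assumes "x \<in> Psi_dom" and "h \<noteq> 0"
  shows "0 < h \<bullet> (hess Psi x *v h)"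
proof -
  obtain i where i: "lift h $ i \<noteq> 0"
    using assms(2) lift_eq_0_iff by (metis vec_eq_iff zero_index)
  have "bar x $ i \<noteq> 0"
    using assms(1) by (simp add: Psi_dom_def less_imp_neq[THEN not_sym])
  with i show ?thesis
    unfolding inner_hess_Psi[OF assms(1)] by (intro sum_pos2[of UNIV i]) auto
qed

lemma grad_floss_square_le_hess_Psi:
  fixes r :: "real^('n::finite option)" and x w :: "real^'n"
  assumes r_nonneg: "\<forall>i. 0 \<le> r $ i" and x: "x \<in> Psi_dom" and pos: "0 < r \<bullet> bar x"
    and "0 < c" and shrink: "c * (r \<bullet> bar x) \<le> r \<bullet> bar w"
  shows "(grad (floss r) w \<bullet> h)\<^sup>2 \<le> (1 / c\<^sup>2) * (h \<bullet> (hess Psi x *v h))"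
proof -
  define R where "R = r \<bullet> bar x"
  define s where "s = r \<bullet> bar w"
  define Q where "Q = h \<bullet> (hess Psi x *v h)"
  have "0 \<le> Q" by (simp add: Q_def inner_hess_Psi[OF x] sum_nonneg)
  have "0 < R" using pos by (simp add: R_def)
  with \<open>0 < c\<close> have cR: "0 < c * R" by simp
  have "c * R \<le> s" using shrink by (simp add: R_def s_def)
  with cR have "0 < s" by linarith
  have "grad (floss r) w \<bullet> h = - (r \<bullet> lift h) / s"
    using \<open>0 < s\<close> by (simp add: s_def grad_floss inner_lift_adj)
  then have "(grad (floss r) w \<bullet> h)\<^sup>2 = (r \<bullet> lift h)\<^sup>2 / s\<^sup>2"
    by (simp add: power_divide)
  also have "\<dots> \<le> R\<^sup>2 * Q / s\<^sup>2"
    using inner_square_le_weighted[OF r_nonneg, of "bar x" "lift h"] x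
    by (intro divide_right_mono) (simp_all add: R_def Q_def inner_hess_Psi Psi_dom_def)
  also have "\<dots> \<le> R\<^sup>2 * Q / (c * R)\<^sup>2"
  proof (rule divide_left_mono)
    show "(c * R)\<^sup>2 \<le> s\<^sup>2" using cR \<open>c * R \<le> s\<close> by (intro power_mono) simp_all
    show "0 < s\<^sup>2 * (c * R)\<^sup>2" using \<open>0 < c\<close> \<open>0 < R\<close> \<open>0 < s\<close> by (intro mult_pos_pos) simp_all
  qed (simp add: \<open>0 \<le> Q\<close>)
  also have "\<dots> = Q / c\<^sup>2"
    using \<open>0 < R\<close> by (simp add: power_mult_distrib)
  finally show ?thesis by (simp add: Q_def)
qed

theorem lemma13:
  fixes r :: "real^('n::finite option)" and \<mu> :: real and wt :: "real^'n"
  assumes "\<forall>i. 0 \<le> r $ i \<and> r $ i \<le> 1" and "r \<noteq> 0"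
    and "0 < \<mu>" and "\<mu> < 1"
    and "wt \<in> simplex_C" and "\<forall>i. bar wt $ i > 0"
  shows "let w = (1 - \<mu>) *\<^sub>R wt + (\<mu> / real (CARD('n) + 1)) *\<^sub>R (\<chi> i. 1) in
           loewner_le (outer (grad (floss r) w)) ((1 - \<mu>) powr (-2) *\<^sub>R hess Psi wt)
         \<and> grad (floss r) w \<bullet> (matrix_inv (hess Psi wt) *v grad (floss r) w) \<le> (1 - \<mu>) powr (-2)"
proof -
  define w where "w = (1 - \<mu>) *\<^sub>R wt + (\<mu> / real (CARD('n) + 1)) *\<^sub>R (\<chi> i. 1 :: real^'n)"
  have r_nonneg: "\<forall>i. 0 \<le> r $ i" using assms(1) by simp
  have wt: "wt \<in> Psi_dom" using assms(6) by (simp add: Psi_dom_def)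
  have pos: "0 < r \<bullet> bar wt" using inner_pos_if_nonneg_nonzero r_nonneg assms(2,6) by blast
  have shrink: "(1 - \<mu>) * (r \<bullet> bar wt) \<le> r \<bullet> bar w"
    unfolding w_def using r_nonneg assms(3) by (intro inner_bar_toward_barycenter_ge) simp_all
  have "(1 - \<mu>) powr (-2) = 1 / (1 - \<mu>)\<^sup>2"
    using assms(4) by (simp add: powr_minus_divide powr_realpow)
  then have "loewner_le (outer (grad (floss r) w)) ((1 - \<mu>) powr (-2) *\<^sub>R hess Psi wt)"
    using grad_floss_square_le_hess_Psi[OF r_nonneg wt pos _ shrink] assms(4)
    by (simp add: loewner_le_outer_iff)
  moreover have "invertible (hess Psi wt)"
    using inner_hess_Psi_pos[OF wt] by (rule invertible_if_pos_def)
  ultimately show ?thesis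
    unfolding Let_def w_def[symmetric]
    using inner_matrix_inv_le_if_loewner_le_outer[of "hess Psi wt" "(1 - \<mu>) powr (-2)"] by simp
qed

end
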